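(* Let $A$ be a finite dimensional algebra with a regular $(\mathbb{Z}_2\times\mathbb{Z}_2)$-grading with bicharacter $\beta$, and assume that $A_{(0,0)}=K$. Then there exists a 2-cocycle $\alpha\in H^2(\mathbb{Z}_2\times\mathbb{Z}_2,K^{*})$ inducing $\beta$ such that $A\cong K^{\alpha}(\mathbb{Z}_2\times\mathbb{Z}_2)$ as $(\mathbb{Z}_2\times\mathbb{Z}_2)$-graded algebras.
   Context: All algebras are associative with unit over an algebraically closed field $K$ of characteristic $0$. For a finite abelian group $G$ (written additively, neutral element $0$), a $G$-grading on $A$ is a vector space decomposition $A=\bigoplus_{g\in G}A_g$ with $A_gA_h\subseteq A_{g+h}$. A $G$-graded algebra $A$ has a regular grading if (i) for every $n\in\mathbb{N}$ and every $(g_1,\dots,g_n)\in G^n$ there exist $a_i\in A_{g_i}$ with $a_1\cdots a_n\neq 0$, and (ii) there is a function $\beta\colon G\times G\to K^{*}$ with $a_ga_h=\beta(g,h)a_ha_g$ for all $g,h\in G$, $a_g\in A_g$, $a_h\in A_h$; $\beta$ is then a bicharacter ($\beta(g,h)=\beta(h,g)^{-1}$, multiplicative in each argument), called the bicharacter of $A$. For a 2-cocycle $\alpha\colon G\times G\to K^*$ (i.e. $\alpha(g,h+k)\alpha(h,k)=\alpha(g+h,k)\alpha(g,h)$), the twisted group algebra $K^{\alpha}G$ has basis $\{X_g: g\in G\}$ with $X_gX_h=\alpha(g,h)X_{g+h}$, $G$-graded by $(K^\alpha G)_g=KX_g$. We say $\alpha$ induces $\beta$ if $\beta(g,h)=\alpha(g,h)\alpha(h,g)^{-1}$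 for all $g,h$. *)

theory Defs
  imports Main "HOL-Library.Z2" "HOL-Library.Product_Plus" "HOL-Library.Function_Algebras" "HOL-Computational_Algebra.Polynomial"
begin

instance bit :: finite
proof
  have "(UNIV :: bit set) = {0, 1}" by (auto intro: bit.exhaust)
  then show "finite (UNIV :: bit set)" by (metis finite.emptyI finite_insert)
qed

type_synonym G4 = "bit \<times> bit"

definition alg_closed :: "'k::field itself \<Rightarrow> bool" where
  "alg_closed _ \<longleftrightarrow> (\<forall>p :: 'k poly. degree p > 0 \<longrightarrow> (\<exists>x. poly p x = 0))"

definition is_algebra :: "('k::field \<Rightarrow> 'a::ring_1 \<Rightarrow> 'a) \<Rightarrow> bool" where
  "is_algebra scale \<longleftrightarrow> Vector_Spaces.vector_space scale \<and>
     (\<forall>c x y. scale c (x * y) = scale c x * y \<and> scale c (x * y) = x * scale c y)"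

definition fin_dim :: "('k::field \<Rightarrow> 'a::ab_group_add \<Rightarrow> 'a) \<Rightarrow> bool" where
  "fin_dim scale \<longleftrightarrow> (\<exists>B. finite B \<and> module.span scale B = UNIV)"

definition is_grading :: "('k::field \<Rightarrow> 'a::ring_1 \<Rightarrow> 'a) \<Rightarrow> ('g::{finite,ab_group_add} \<Rightarrow> 'a set) \<Rightarrow> bool" where
  "is_grading scale Ac \<longleftrightarrow>
     (\<forall>g. module.subspace scale (Ac g)) \<and>
     (\<forall>x. \<exists>!f. (\<forall>g. f g \<in> Ac g) \<and> x = (\<Sum>g\<in>UNIV. f g)) \<and>
     (\<forall>g h a b. a \<in> Ac g \<longrightarrow> b \<in> Ac h \<longrightarrow> a * b \<in> Ac (g + h))"

definition regular_grading :: "('g::{finite,ab_group_add} \<Rightarrow> 'a::ring_1 set) \<Rightarrow> ('g \<Rightarrow> 'g \<Rightarrow> 'k::field) \<Rightarrow> bool" where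
  "regular_grading Ac \<beta> \<longleftrightarrow>
     (\<forall>gs :: 'g list. \<exists>as. length as = length gs \<and> (\<forall>i<length gs. as ! i \<in> Ac (gs ! i))
                          \<and> prod_list as \<noteq> 0) \<and>
     (\<forall>g h. \<beta> g h \<noteq> 0) "

definition has_bicharacter :: "('k::field \<Rightarrow> 'a::ring_1 \<Rightarrow> 'a) \<Rightarrow> ('g::{finite,ab_group_add} \<Rightarrow> 'a set) \<Rightarrow> ('g \<Rightarrow> 'g \<Rightarrow> 'k) \<Rightarrow> bool" where
  "has_bicharacter scale Ac \<beta> \<longleftrightarrow>
     (\<forall>g h a b. a \<in> Ac g \<longrightarrow> b \<in> Ac h \<longrightarrow> a * b = scale (\<beta> g h) (b * a))"

definition two_cocycle :: "('g::ab_group_add \<Rightarrow> 'g \<Rightarrow> 'k::field) \<Rightarrow> bool" where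
  "two_cocycle \<alpha> \<longleftrightarrow> (\<forall>g h. \<alpha> g h \<noteq> 0) \<and>
     (\<forall>g h k. \<alpha> g (h + k) * \<alpha> h k = \<alpha> (g + h) k * \<alpha> g h)"

definition induces :: "('g \<Rightarrow> 'g \<Rightarrow> 'k::field) \<Rightarrow> ('g \<Rightarrow> 'g \<Rightarrow> 'k) \<Rightarrow> bool" where
  "induces \<alpha> \<beta> \<longleftrightarrow> (\<forall>g h. \<beta> g h = \<alpha> g h / \<alpha> h g)"

text \<open>Twisted group algebra K^alpha G, realized on functions G => K:
  u corresponds to sum_g u(g) X_g, with X_g X_h = alpha(g,h) X_(g+h).\<close>
definition tw_scale :: "'k::field \<Rightarrow> ('g \<Rightarrow> 'k) \<Rightarrow> ('g \<Rightarrow> 'k)" where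
  "tw_scale c u = (\<lambda>g. c * u g)"

definition tw_mult :: "('g::{finite,ab_group_add} \<Rightarrow> 'g \<Rightarrow> 'k::field) \<Rightarrow> ('g \<Rightarrow> 'k) \<Rightarrow> ('g \<Rightarrow> 'k) \<Rightarrow> ('g \<Rightarrow> 'k)" where
  "tw_mult \<alpha> u v = (\<lambda>k. \<Sum>g\<in>UNIV. \<alpha> g (k - g) * u g * v (k - g))"

definition tw_comp :: "'g \<Rightarrow> ('g \<Rightarrow> 'k::field) set" where
  "tw_comp g = {u. \<forall>h. h \<noteq> g \<longrightarrow> u h = 0}"

definition graded_iso_twisted ::
  "('k::field \<Rightarrow> 'a::ring_1 \<Rightarrow> 'a) \<Rightarrow> ('g::{finite,ab_group_add} \<Rightarrow> 'a set) \<Rightarrow> ('g \<Rightarrow> 'g \<Rightarrow> 'k) \<Rightarrow> ('a \<Rightarrow> ('g \<Rightarrow> 'k)) \<Rightarrow> bool" where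
  "graded_iso_twisted scale Ac \<alpha> \<phi> \<longleftrightarrow>
     Vector_Spaces.linear scale tw_scale \<phi> \<and> bij \<phi> \<and>
     (\<forall>x y. \<phi> (x * y) = tw_mult \<alpha> (\<phi> x) (\<phi> y)) \<and>
     (\<forall>g. \<phi> ` Ac g = tw_comp g)"

end

theory Submission
  imports Defs
begin

text \<open>Regularity provides homogeneous a in A_g and b in A_-g with a b nonzero; as A_0 = K,
  a b is a nonzero scalar, so every component contains a unit X_g and is the line K X_g. Hence X_g X_h = alpha(g,h) X_(g+h) for scalars alpha(g,h), associativity of A is the
  cocycle identity, comparing X_g X_h with X_h X_g shows that alpha induces beta, and
  sum_g u(g) X_g is a graded isomorphism from K^alpha G onto A. The group G can be any finite
  abelian group.\<close>

lemma vector_space_tw_scale: "vector_space (tw_scale :: 'k::field \<Rightarrow> ('g \<Rightarrow> 'k) \<Rightarrow> _)"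
  by unfold_locales (auto simp: tw_scale_def fun_eq_iff algebra_simps)

lemma sum_translate:
  fixes f :: "'g::{finite,ab_group_add} \<Rightarrow> 'a::comm_monoid_add"
  shows "(\<Sum>h\<in>UNIV. f (g + h)) = (\<Sum>k\<in>UNIV. f k)"
  by (rule sum.reindex_bij_witness[of _ "\<lambda>k. k - g" "\<lambda>h. g + h"]) auto

locale graded_algebra =
  fixes scale :: "'k::field \<Rightarrow> 'a::ring_1 \<Rightarrow> 'a"
    and Ac :: "'g::{finite,ab_group_add} \<Rightarrow> 'a set"
  assumes algebra: "is_algebra scale"
    and grading: "is_grading scale Ac"
begin

sublocale V: vector_space scale
  using algebra by (simp add: is_algebra_def)

lemma scale_mult_left: "scale c (x * y) = scale c x * y"
  and scale_mult_right: "scale c (x * y) = x * scale c y"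
  using algebra unfolding is_algebra_def by blast+

lemma component_subspace: "V.subspace (Ac g)"
  using grading by (simp add: is_grading_def)

lemma homogeneous_decomposition: "\<exists>!f. (\<forall>g. f g \<in> Ac g) \<and> x = (\<Sum>g\<in>UNIV. f g)"
  using grading by (simp add: is_grading_def)

lemma homogeneous_decomposition_unique:
  assumes "\<And>g. f g \<in> Ac g" "\<And>g. f' g \<in> Ac g" "(\<Sum>g\<in>UNIV. f g) = (\<Sum>g\<in>UNIV. f' g)"
  shows "f = f'"
  using homogeneous_decomposition[of "\<Sum>g\<in>UNIV. f g"] assms by blast

lemma component_mult: "a \<in> Ac g \<Longrightarrow> b \<in> Ac h \<Longrightarrow> a * b \<in> Ac (g + h)"
  using grading by (simp add: is_grading_def)

end

locale scalar_neutral_graded_algebra = graded_algebra scale Ac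
  for scale :: "'k::field \<Rightarrow> 'a::ring_1 \<Rightarrow> 'a" and Ac :: "'g::{finite,ab_group_add} \<Rightarrow> 'a set" +
  assumes neutral_component: "Ac 0 = range (\<lambda>c. scale c 1)"
    and products_nonzero: "\<And>g h. \<exists>a\<in>Ac g. \<exists>b\<in>Ac h. a * b \<noteq> 0"
begin

lemma one_neq_zero: "(1::'a) \<noteq> 0"
proof
  assume one: "(1::'a) = 0"
  obtain a b :: 'a where "a * b \<noteq> 0"
    using products_nonzero[of 0 0] by blast
  moreover have "a * b = a * b * 1"
    by simp
  ultimately show False
    using one by simp
qed

lemma component_has_unit: "\<exists>x y. x \<in> Ac g \<and> y \<in> Ac (- g) \<and> x * y = 1 \<and> y * x = 1"
proof -
  obtain a b where a: "a \<in> Ac g" and b: "b \<in> Ac (- g)" and ab: "a * b \<noteq> 0"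
    using products_nonzero by blast
  have "a * b \<in> Ac 0"
    using component_mult[OF a b] by simp
  then obtain c where c: "a * b = scale c 1"
    using neutral_component by auto
  define y where "y = scale (inverse c) b"
  have right_inverse: "a * y = 1"
    unfolding y_def using c ab by (simp flip: scale_mult_right)
  have y: "y \<in> Ac (- g)"
    unfolding y_def using component_subspace b V.subspace_scale by blast
  have "y * a \<in> Ac 0"
    using component_mult[OF y a] by simp
  then obtain d where d: "y * a = scale d 1"
    using neutral_component by auto
  \<comment> \<open>a (y a) = (a y) a forces the scalar y a to be 1\<close>
  have "scale d a = a * (y * a)"
    using d by (simp flip: scale_mult_right)
  also have "\<dots> = scale 1 a"
    by (simp flip: mult.assoc add: right_inverse)
  finally have "d = 1"
    using ab V.scale_cancel_right by (metis mult_zero_left)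
  then show ?thesis
    using a y right_inverse d by auto
qed

definition unit_of :: "'g \<Rightarrow> 'a" where
  "unit_of g = (SOME x. \<exists>y. x \<in> Ac g \<and> y \<in> Ac (- g) \<and> x * y = 1 \<and> y * x = 1)"

definition unit_inverse :: "'g \<Rightarrow> 'a" where
  "unit_inverse g =
     (SOME y. y \<in> Ac (- g) \<and> unit_of g * y = 1 \<and> y * unit_of g = 1)"

lemma unit_of_in: "unit_of g \<in> Ac g"
  and unit_inverse_in: "unit_inverse g \<in> Ac (- g)"
  and unit_of_inverse: "unit_of g * unit_inverse g = 1"
  and unit_inverse_of: "unit_inverse g * unit_of g = 1"
proof -
  have "\<exists>y. unit_of g \<in> Ac g \<and> y \<in> Ac (- g) \<and> unit_of g * y = 1 \<and> y * unit_of g = 1"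
    unfolding unit_of_def using component_has_unit[of g] by (rule someI_ex)
  then have "unit_of g \<in> Ac g \<and> unit_inverse g \<in> Ac (- g) \<and>
      unit_of g * unit_inverse g = 1 \<and> unit_inverse g * unit_of g = 1"
    unfolding unit_inverse_def by (metis (mono_tags, lifting) someI_ex)
  then show "unit_of g \<in> Ac g" "unit_inverse g \<in> Ac (- g)"
    "unit_of g * unit_inverse g = 1" "unit_inverse g * unit_of g = 1" by auto
qed

lemma unit_of_nonzero: "unit_of g \<noteq> 0"
  using unit_of_inverse[of g] one_neq_zero by auto

lemma scale_unit_of_inject: "scale c (unit_of g) = scale d (unit_of g) \<Longrightarrow> c = d"
  using unit_of_nonzero V.scale_cancel_right by blast

lemma scale_unit_of_in: "scale c (unit_of g) \<in> Ac g"
  using component_subspace unit_of_in V.subspace_scale by blast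

lemma component_eq_line: "a \<in> Ac g \<Longrightarrow> \<exists>c. a = scale c (unit_of g)"
proof -
  assume a: "a \<in> Ac g"
  have "a * unit_inverse g \<in> Ac 0"
    using component_mult[OF a unit_inverse_in[of g]] by simp
  then obtain c where c: "a * unit_inverse g = scale c 1"
    using neutral_component by auto
  have "a = a * unit_inverse g * unit_of g"
    by (simp add: mult.assoc unit_inverse_of)
  also have "\<dots> = scale c (unit_of g)"
    using c by (simp flip: scale_mult_left)
  finally show ?thesis by blast
qed

definition cocycle :: "'g \<Rightarrow> 'g \<Rightarrow> 'k" where
  "cocycle g h = (SOME c. unit_of g * unit_of h = scale c (unit_of (g + h)))"

lemma unit_of_mult: "unit_of g * unit_of h = scale (cocycle g h) (unit_of (g + h))"
  unfolding cocycle_def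
  using component_eq_line[OF component_mult[OF unit_of_in unit_of_in]] by (rule someI_ex)

lemma cocycle_nonzero: "cocycle g h \<noteq> 0"
proof
  assume "cocycle g h = 0"
  then have "unit_of g * unit_of h * unit_inverse h * unit_inverse g = 0"
    by (simp add: unit_of_mult)
  moreover have "unit_of g * unit_of h * unit_inverse h * unit_inverse g = 1"
    by (simp add: mult.assoc unit_of_inverse flip: mult.assoc[of "unit_of g"])
  ultimately show False using one_neq_zero by simp
qed

lemma two_cocycle_cocycle: "two_cocycle cocycle"
  unfolding two_cocycle_def
proof (intro conjI allI cocycle_nonzero)
  fix g h k
  have "unit_of g * unit_of h * unit_of k =
      scale (cocycle (g + h) k * cocycle g h) (unit_of (g + h + k))"
    by (simp add: unit_of_mult mult.commute flip: scale_mult_left)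
  moreover have "unit_of g * (unit_of h * unit_of k) =
      scale (cocycle g (h + k) * cocycle h k) (unit_of (g + h + k))"
    by (simp add: unit_of_mult mult.commute add.assoc flip: scale_mult_right)
  ultimately show "cocycle g (h + k) * cocycle h k = cocycle (g + h) k * cocycle g h"
    by (metis scale_unit_of_inject mult.assoc)
qed

lemma cocycle_induces:
  assumes "has_bicharacter scale Ac \<beta>"
  shows "induces cocycle \<beta>"
  unfolding induces_def
proof (intro allI)
  fix g h
  have "unit_of g * unit_of h = scale (\<beta> g h) (unit_of h * unit_of g)"
    using assms unit_of_in by (simp add: has_bicharacter_def)
  then have "scale (cocycle g h) (unit_of (g + h)) =
      scale (\<beta> g h * cocycle h g) (unit_of (g + h))"
    by (simp add: unit_of_mult add.commute)
  then have "cocycle g h = \<beta> g h * cocycle h g"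
    by (rule scale_unit_of_inject)
  then show "\<beta> g h = cocycle g h / cocycle h g"
    using cocycle_nonzero[of h g] by simp
qed

definition from_twisted :: "('g \<Rightarrow> 'k) \<Rightarrow> 'a" where
  "from_twisted u = (\<Sum>g\<in>UNIV. scale (u g) (unit_of g))"

lemma from_twisted_inj: "inj from_twisted"
proof (rule injI)
  fix u v assume eq: "from_twisted u = from_twisted v"
  have "(\<lambda>g. scale (u g) (unit_of g)) = (\<lambda>g. scale (v g) (unit_of g))"
    using eq unfolding from_twisted_def by (intro homogeneous_decomposition_unique scale_unit_of_in)
  then show "u = v"
    by (metis ext scale_unit_of_inject)
qed

lemma from_twisted_surj: "surj from_twisted"
  unfolding surj_def
proof
  fix x
  obtain f where f: "\<And>g. f g \<in> Ac g" "x = (\<Sum>g\<in>UNIV. f g)"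
    using homogeneous_decomposition[of x] by blast
  have "\<forall>g. \<exists>c. f g = scale c (unit_of g)"
    using f(1) component_eq_line by blast
  then obtain u where "\<And>g. f g = scale (u g) (unit_of g)" by metis
  then have "x = from_twisted u"
    unfolding from_twisted_def f(2) by simp
  then show "\<exists>u. x = from_twisted u" by blast
qed

lemma from_twisted_add: "from_twisted (u + v) = from_twisted u + from_twisted v"
  unfolding from_twisted_def by (simp add: V.scale_left_distrib sum.distrib)

lemma from_twisted_scale: "from_twisted (tw_scale c u) = scale c (from_twisted u)"
  unfolding from_twisted_def tw_scale_def by (simp add: V.scale_sum_right)

lemma scale_unit_of_mult:
  "scale c (unit_of g) * scale d (unit_of h) = scale (cocycle g h * c * d) (unit_of (g + h))"
proof -
  have "scale c (unit_of g) * scale d (unit_of h) = scale c (scale d (unit_of g * unit_of h))"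
    by (simp only: V.scale_left_commute flip: scale_mult_left scale_mult_right)
  then show ?thesis
    by (simp add: unit_of_mult mult_ac)
qed

lemma from_twisted_mult: "from_twisted (tw_mult cocycle u v) = from_twisted u * from_twisted v"
proof -
  have "from_twisted u * from_twisted v =
      (\<Sum>g\<in>UNIV. \<Sum>h\<in>UNIV. scale (cocycle g h * u g * v h) (unit_of (g + h)))"
    unfolding from_twisted_def by (simp only: sum_product scale_unit_of_mult)
  also have "\<dots> = (\<Sum>g\<in>UNIV. \<Sum>k\<in>UNIV. scale (cocycle g (k - g) * u g * v (k - g)) (unit_of k))"
  proof (rule sum.cong[OF refl])
    fix g
    show "(\<Sum>h\<in>UNIV. scale (cocycle g h * u g * v h) (unit_of (g + h))) =
        (\<Sum>k\<in>UNIV. scale (cocycle g (k - g) * u g * v (k - g)) (unit_of k))"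
      using sum_translate[of "\<lambda>k. scale (cocycle g (k - g) * u g * v (k - g)) (unit_of k)" g]
      by simp
  qed
  also have "\<dots> = (\<Sum>k\<in>UNIV. \<Sum>g\<in>UNIV. scale (cocycle g (k - g) * u g * v (k - g)) (unit_of k))"
    by (rule sum.swap)
  also have "\<dots> = from_twisted (tw_mult cocycle u v)"
    unfolding from_twisted_def tw_mult_def by (simp add: V.scale_sum_left)
  finally show ?thesis by simp
qed

lemma from_twisted_comp: "from_twisted ` tw_comp g = Ac g"
proof -
  have single: "from_twisted u = scale (u g) (unit_of g)" if "u \<in> tw_comp g" for u
  proof -
    have "from_twisted u = (\<Sum>h\<in>UNIV. if h = g then scale (u g) (unit_of g) else 0)"
      unfolding from_twisted_def by (rule sum.cong) (use that in \<open>auto simp: tw_comp_def\<close>)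
    then show ?thesis by simp
  qed
  have "a \<in> from_twisted ` tw_comp g" if a: "a \<in> Ac g" for a
  proof -
    obtain c where c: "a = scale c (unit_of g)"
      using component_eq_line[OF a] by blast
    have u: "(\<lambda>h. if h = g then c else 0) \<in> tw_comp g"
      by (simp add: tw_comp_def)
    show ?thesis
      using single[OF u] c by (intro image_eqI[OF _ u]) simp
  qed
  then show ?thesis
    using single scale_unit_of_in by auto
qed

lemma graded_iso_twisted_inv_from_twisted:
  "graded_iso_twisted scale Ac cocycle (inv from_twisted)"
proof -
  have bij: "bij from_twisted"
    using from_twisted_inj from_twisted_surj by (rule bijI)
  then have inv_left: "inv from_twisted (from_twisted u) = u"
    and inv_right: "from_twisted (inv from_twisted x) = x" for u x
    by (simp_all add: bij_is_inj bij_is_surj surj_f_inv_f)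
  have "module_hom tw_scale scale from_twisted"
    using vector_space_tw_scale V.vector_space_axioms
    by (auto simp: module_hom_iff_linear Vector_Spaces.linear_iff from_twisted_add from_twisted_scale)
  then have linear: "Vector_Spaces.linear scale tw_scale (inv from_twisted)"
    using bij by (simp add: bij_module_hom_imp_inv_module_hom flip: module_hom_iff_linear)
  have mult: "inv from_twisted (x * y) =
      tw_mult cocycle (inv from_twisted x) (inv from_twisted y)" for x y
  proof -
    have "x * y = from_twisted (tw_mult cocycle (inv from_twisted x) (inv from_twisted y))"
      by (simp only: from_twisted_mult inv_right)
    then show ?thesis by (simp only: inv_left)
  qed
  have comp: "inv from_twisted ` Ac g = tw_comp g" for g
    by (simp only: from_twisted_comp[of g, symmetric] image_image inv_left image_ident)
  show ?thesis
    unfolding graded_iso_twisted_def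
    using linear bij_imp_bij_inv[OF bij] mult comp by blast
qed

end

lemma regular_grading_products_nonzero:
  assumes "regular_grading Ac \<beta>"
  shows "\<exists>a\<in>Ac g. \<exists>b\<in>Ac h. a * b \<noteq> 0"
proof -
  obtain as where len: "length as = length [g, h]"
    and homogeneous: "\<forall>i<length [g, h]. as ! i \<in> Ac ([g, h] ! i)" and nonzero: "prod_list as \<noteq> 0"
    using assms unfolding regular_grading_def by blast
  obtain a b where as: "as = [a, b]"
    using len by (auto simp: length_Suc_conv)
  have "a \<in> Ac g" "b \<in> Ac h"
    using homogeneous unfolding as by auto
  moreover have "a * b \<noteq> 0"
    using nonzero unfolding as by simp
  ultimately show ?thesis
    by blast
qed

theorem mainTheorem1:
  fixes scale :: "'k::field_char_0 \<Rightarrow> 'a::ring_1 \<Rightarrow> 'a"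
    and Ac :: "G4 \<Rightarrow> 'a set"
    and \<beta> :: "G4 \<Rightarrow> G4 \<Rightarrow> 'k"
  assumes "alg_closed TYPE('k)"
    and "is_algebra scale"
    and "fin_dim scale"
    and "is_grading scale Ac"
    and "regular_grading Ac \<beta>"
    and "has_bicharacter scale Ac \<beta>"
    and "Ac 0 = range (\<lambda>c. scale c 1)"
  shows "\<exists>\<alpha> :: G4 \<Rightarrow> G4 \<Rightarrow> 'k. two_cocycle \<alpha> \<and> induces \<alpha> \<beta> \<and>
           (\<exists>\<phi>. graded_iso_twisted scale Ac \<alpha> \<phi>)"
proof -
  interpret scalar_neutral_graded_algebra scale Ac
  proof unfold_locales
    show "\<exists>a\<in>Ac g. \<exists>b\<in>Ac h. a * b \<noteq> 0" for g h
      using assms(5) by (rule regular_grading_products_nonzero)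
  qed (fact assms)+
  show ?thesis
    using two_cocycle_cocycle cocycle_induces[OF assms(6)] graded_iso_twisted_inv_from_twisted
    by (intro exI conjI)
qed

end
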